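(* Assume (A1). Let $g:\Gamma\to\mathbb R$ and let $u$ be the solution of problem (P) with boundary data $g$. Fix $x\in\mathcal X$ and define the stochastic process $X_0,X_1,X_2,\dots$ on $\mathcal X$ as follows: $X_0=x$; given $X_i$, if $X_i\in\Gamma$ set $X_{i+1}=X_i$; if $X_i\notin\Gamma$, choose $X_{i+1}$ (independently of everything else) by: with probability $\alpha$, $X_{i+1}=y$ with probability $w_{X_i y}/d_{X_i}$ (a random walk step); with probability $\frac12(1-\alpha)$, $X_{i+1}$ is a point of $\operatorname{argmax}_{y\in N_{X_i}}u(y)$; with probability $\frac12(1-\alpha)$, $X_{i+1}$ is a point of $\operatorname{argmin}_{y\in N_{X_i}\cap\Gamma}g(y)$ (ties broken by any fixed rule). Then $Z_i=u(X_i)$ is a sub-martingale with respect to $(X_i)$, i.e. $\mathbb E[Z_{i+1}\mid X_i]\ge Z_i$ for all $i\ge0$.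
   Context: $\mathcal X$ is a finite vertex set and $W=(w_{xy})$ a symmetric matrix of nonnegative weights defining a connected graph, with degrees $d_x=\sum_{y}w_{xy}$ and neighbor sets $N_x=\{y\in\mathcal X:w_{xy}>0\}$. For $p\ge2$, $\alpha=1/(p-1)$, and $$\mathcal L_p u(x)=\alpha\,\frac{1}{d_x}\sum_{y}w_{xy}\big(u(x)-u(y)\big)+(1-\alpha)\Big(u(x)-\tfrac12\big(\max_{N_x}u+\min_{N_x}u\big)\Big).$$ $\Gamma\subset\mathcal X$ is the set of labeled vertices. Problem (P): find $u:\mathcal X\to\mathbb R$ with $\mathcal L_pu(x)=0$ for $x\in\mathcal X\setminus\Gamma$ and $u=g$ on $\Gamma$; since the graph is connected it has a unique solution. Assumption (A1): $\Gamma\cap N_x\neq\varnothing$ for every $x\in\mathcal X$. *)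

theory Defs
  imports "HOL-Probability.Probability"
begin

definition deg :: "('a::finite \<Rightarrow> 'a \<Rightarrow> real) \<Rightarrow> 'a \<Rightarrow> real" where
  "deg w x = (\<Sum>y\<in>UNIV. w x y)"

definition nbhd :: "('a \<Rightarrow> 'a \<Rightarrow> real) \<Rightarrow> 'a \<Rightarrow> 'a set" where
  "nbhd w x = {y. w x y > 0}"

definition connected_graph :: "('a \<Rightarrow> 'a \<Rightarrow> real) \<Rightarrow> bool" where
  "connected_graph w \<longleftrightarrow> (\<forall>x y. (x, y) \<in> {(a, b). w a b > 0}\<^sup>*)"

definition Lp :: "('a::finite \<Rightarrow> 'a \<Rightarrow> real) \<Rightarrow> real \<Rightarrow> ('a \<Rightarrow> real) \<Rightarrow> 'a \<Rightarrow> real" where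
  "Lp w p u x =
     (let \<alpha> = 1 / (p - 1) in
      \<alpha> * ((1 / deg w x) * (\<Sum>y\<in>UNIV. w x y * (u x - u y)))
      + (1 - \<alpha>) * (u x - (Max (u ` nbhd w x) + Min (u ` nbhd w x)) / 2))"

definition rw_step :: "('a::finite \<Rightarrow> 'a \<Rightarrow> real) \<Rightarrow> 'a \<Rightarrow> 'a pmf" where
  "rw_step w z = embed_pmf (\<lambda>y. w z y / deg w z)"

definition trans_pmf ::
  "('a::finite \<Rightarrow> 'a \<Rightarrow> real) \<Rightarrow> real \<Rightarrow> 'a set \<Rightarrow> ('a \<Rightarrow> 'a) \<Rightarrow> ('a \<Rightarrow> 'a) \<Rightarrow> 'a \<Rightarrow> 'a pmf" where
  "trans_pmf w p \<Gamma> ymax ymin z =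
     (if z \<in> \<Gamma> then return_pmf z
      else do {
        c \<leftarrow> bernoulli_pmf (1 / (p - 1));
        if c then rw_step w z
        else do {
          b \<leftarrow> bernoulli_pmf (1/2);
          return_pmf (if b then ymax z else ymin z)
        }
      })"

definition chain_dist :: "('a \<Rightarrow> 'a pmf) \<Rightarrow> 'a \<Rightarrow> nat \<Rightarrow> 'a pmf" where
  "chain_dist K x i = ((\<lambda>\<mu>. bind_pmf \<mu> K) ^^ i) (return_pmf x)"

definition chain_pair :: "('a \<Rightarrow> 'a pmf) \<Rightarrow> 'a \<Rightarrow> nat \<Rightarrow> ('a \<times> 'a) pmf" where
  "chain_pair K x i = bind_pmf (chain_dist K x i) (\<lambda>a. map_pmf (\<lambda>b. (a, b)) (K a))"

end

theory Submission
  imports Defs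
begin

text \<open>
  At an unlabeled vertex z the equation L_p u(z) = 0 says that u(z) is the
  \<alpha>-mixture of the random-walk average of u and of (max u + min u)/2 over the
  neighbourhood N_z. One step of the process replaces this by the mixture of the
  same random-walk average and of (u(ymax z) + u(ymin z))/2. Here u(ymax z) is the
  maximum, while u(ymin z) is at least the minimum because ymin z \<in> N_z, so the
  expected next value is at least u(z). At labeled vertices the process stops.
\<close>

definition walk_mean :: "('a::finite \<Rightarrow> 'a \<Rightarrow> real) \<Rightarrow> ('a \<Rightarrow> real) \<Rightarrow> 'a \<Rightarrow> real" where
  "walk_mean w u z = (\<Sum>y\<in>UNIV. w z y * u y) / deg w z"

lemma pmf_bind_pair:
  "pmf (bind_pmf D (\<lambda>a. map_pmf (\<lambda>b. (a, b)) (K a))) (a, b) = pmf D a * pmf (K a) b"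
proof -
  have "pmf (bind_pmf D (\<lambda>a. map_pmf (\<lambda>b. (a, b)) (K a))) (a, b)
      = (\<integral>x. pmf (map_pmf (\<lambda>b. (x, b)) (K x)) (a, b) \<partial>measure_pmf D)"
    by (rule pmf_bind)
  also have "\<dots> = (\<Sum>x\<in>{a}. pmf (map_pmf (\<lambda>b. (x, b)) (K x)) (a, b) * pmf D x)"
  proof (rule integral_measure_pmf_real)
    fix x assume "pmf (map_pmf (\<lambda>b. (x, b)) (K x)) (a, b) \<noteq> 0"
    then have "(a, b) \<in> set_pmf (map_pmf (\<lambda>b. (x, b)) (K x))" by (metis pmf_eq_0_set_pmf)
    then show "x \<in> {a}" by auto
  qed simp
  also have "\<dots> = pmf D a * pmf (K a) b"
    using pmf_map_inj'[of "\<lambda>b. (a, b)" "K a" b] by (simp add: inj_def)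
  finally show ?thesis .
qed

lemma cond_pmf_bind_pair_fst:
  assumes z: "z \<in> set_pmf D"
  shows "cond_pmf (bind_pmf D (\<lambda>a. map_pmf (\<lambda>b. (a, b)) (K a))) {q. fst q = z}
         = map_pmf (\<lambda>b. (z, b)) (K z)"
proof -
  define P where "P = bind_pmf D (\<lambda>a. map_pmf (\<lambda>b. (a, b)) (K a))"
  obtain b0 where "b0 \<in> set_pmf (K z)" by (meson all_not_in_conv set_pmf_not_empty)
  then have "(z, b0) \<in> set_pmf P" using z unfolding P_def by auto
  then have ne: "set_pmf P \<inter> {q. fst q = z} \<noteq> {}" by auto
  have "map_pmf fst P = D"
    unfolding P_def by (simp add: map_bind_pmf pmf.map_comp o_def map_pmf_const bind_return_pmf')
  have meas: "measure P {q. fst q = z} = pmf D z"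
  proof -
    have "measure P {q. fst q = z} = measure (map_pmf fst P) {z}"
      by (simp add: measure_map_pmf vimage_def)
    then show ?thesis using \<open>map_pmf fst P = D\<close> by (simp add: measure_pmf_single)
  qed
  have pz: "pmf D z > 0" using z by (simp add: pmf_positive)
  show ?thesis
    unfolding P_def[symmetric]
  proof (rule pmf_eqI)
    fix q :: "'a \<times> 'b"
    obtain a b where q: "q = (a, b)" by (cases q)
    show "pmf (cond_pmf P {q. fst q = z}) q = pmf (map_pmf (\<lambda>b. (z, b)) (K z)) q"
    proof (cases "a = z")
      case True
      then show ?thesis
        using pmf_cond[OF ne] meas pz q pmf_map_inj'[of "\<lambda>b. (z, b)" "K z" b]
        by (simp add: P_def pmf_bind_pair inj_def)
    next
      case False
      then have "pmf (map_pmf (\<lambda>b. (z, b)) (K z)) q = 0"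
        using q by (auto simp: pmf_eq_0_set_pmf)
      then show ?thesis using pmf_cond[OF ne] False q by simp
    qed
  qed
qed

lemma expectation_cond_chain_pair:
  fixes f :: "'a \<Rightarrow> real"
  assumes "z \<in> set_pmf (chain_dist K x i)"
  shows "measure_pmf.expectation (cond_pmf (chain_pair K x i) {q. fst q = z}) (\<lambda>q. f (snd q))
         = measure_pmf.expectation (K z) f"
  using assms by (simp add: chain_pair_def cond_pmf_bind_pair_fst)

lemma deg_pos_if_nbhd_nonempty:
  fixes w :: "'a::finite \<Rightarrow> 'a \<Rightarrow> real"
  assumes "\<And>a b. w a b \<ge> 0" and "nbhd w z \<noteq> {}"
  shows "deg w z > 0"
proof -
  obtain y where y: "w z y > 0" using assms(2) by (auto simp: nbhd_def)
  have "w z y \<le> deg w z"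
    unfolding deg_def by (rule member_le_sum) (auto simp: assms(1))
  then show ?thesis using y by simp
qed

lemma expectation_rw_step:
  fixes w :: "'a::finite \<Rightarrow> 'a \<Rightarrow> real"
  assumes nonneg: "\<And>a b. w a b \<ge> 0" and deg: "deg w z > 0"
  shows "measure_pmf.expectation (rw_step w z) u = walk_mean w u z"
proof -
  have nn: "0 \<le> w z y / deg w z" for y using nonneg deg by simp
  have "(\<Sum>y\<in>UNIV. w z y / deg w z) = 1"
    using deg by (simp add: sum_divide_distrib[symmetric] deg_def)
  then have "(\<integral>\<^sup>+y. ennreal (w z y / deg w z) \<partial>count_space UNIV) = 1"
    using nn by (simp add: nn_integral_count_space_finite sum_ennreal)
  then have pmf_rw: "pmf (rw_step w z) y = w z y / deg w z" for y
    unfolding rw_step_def by (rule pmf_embed_pmf[OF nn])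
  show ?thesis
    by (subst integral_measure_pmf_real[of UNIV])
       (auto simp: pmf_rw walk_mean_def sum_divide_distrib algebra_simps)
qed

lemma expectation_trans_pmf_unlabeled:
  fixes w :: "'a::finite \<Rightarrow> 'a \<Rightarrow> real"
  assumes nonneg: "\<And>a b. w a b \<ge> 0" and deg: "deg w z > 0" and z: "z \<notin> \<Gamma>"
    and \<alpha>: "0 \<le> 1 / (p - 1)" "1 / (p - 1) \<le> 1"
  shows "measure_pmf.expectation (trans_pmf w p \<Gamma> ymax ymin z) u
         = 1 / (p - 1) * walk_mean w u z
           + (1 - 1 / (p - 1)) * ((u (ymax z) + u (ymin z)) / 2)"
proof -
  have max_min: "measure_pmf.expectation
      (bernoulli_pmf (1/2) \<bind> (\<lambda>b. return_pmf (if b then ymax z else ymin z))) u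
      = (u (ymax z) + u (ymin z)) / 2"
    by (subst pmf_expectation_bind[of UNIV]) (auto simp: UNIV_bool)
  have "trans_pmf w p \<Gamma> ymax ymin z = bernoulli_pmf (1 / (p - 1)) \<bind>
      (\<lambda>c. if c then rw_step w z
           else bernoulli_pmf (1/2) \<bind> (\<lambda>b. return_pmf (if b then ymax z else ymin z)))"
    using z by (simp add: trans_pmf_def)
  then show ?thesis
    using \<alpha>
    by (simp, subst pmf_expectation_bind[of UNIV])
       (auto simp: UNIV_bool expectation_rw_step[OF nonneg deg] max_min algebra_simps)
qed

lemma Lp_eq_0_iff:
  fixes w :: "'a::finite \<Rightarrow> 'a \<Rightarrow> real"
  assumes deg: "deg w z > 0"
  shows "Lp w p u z = 0 \<longleftrightarrow>
    u z = 1 / (p - 1) * walk_mean w u z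
          + (1 - 1 / (p - 1)) * ((Max (u ` nbhd w z) + Min (u ` nbhd w z)) / 2)"
proof -
  have mean: "(1 / deg w z) * (\<Sum>y\<in>UNIV. w z y * (u z - u y)) = u z - walk_mean w u z"
    using deg by (simp add: walk_mean_def sum_subtractf sum_distrib_left[symmetric]
        deg_def field_simps)
  show ?thesis
    unfolding Lp_def Let_def mean by (auto simp: algebra_simps)
qed

theorem mainTheorem2:
  fixes w :: "'a::finite \<Rightarrow> 'a \<Rightarrow> real"
    and p :: real and \<Gamma> :: "'a set" and g u :: "'a \<Rightarrow> real"
    and ymax ymin :: "'a \<Rightarrow> 'a" and x :: 'a
  assumes sym: "\<And>a b. w a b = w b a"
    and nonneg: "\<And>a b. w a b \<ge> 0"
    and conn: "connected_graph w"
    and p: "p \<ge> 2"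
    and A1: "\<And>z. \<Gamma> \<inter> nbhd w z \<noteq> {}"
    and solP_int: "\<And>z. z \<notin> \<Gamma> \<Longrightarrow> Lp w p u z = 0"
    and solP_bdry: "\<And>z. z \<in> \<Gamma> \<Longrightarrow> u z = g z"
    and ymax: "\<And>z. z \<notin> \<Gamma> \<Longrightarrow> ymax z \<in> nbhd w z \<and> u (ymax z) = Max (u ` nbhd w z)"
    and ymin: "\<And>z. z \<notin> \<Gamma> \<Longrightarrow> ymin z \<in> nbhd w z \<inter> \<Gamma> \<and> g (ymin z) = Min (g ` (nbhd w z \<inter> \<Gamma>))"
  shows "\<forall>i z. z \<in> set_pmf (chain_dist (trans_pmf w p \<Gamma> ymax ymin) x i) \<longrightarrow>
           measure_pmf.expectation
             (cond_pmf (chain_pair (trans_pmf w p \<Gamma> ymax ymin) x i) {q. fst q = z})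
             (\<lambda>q. u (snd q)) \<ge> u z"
proof (intro allI impI)
  fix i z
  assume "z \<in> set_pmf (chain_dist (trans_pmf w p \<Gamma> ymax ymin) x i)"
  moreover have "measure_pmf.expectation (trans_pmf w p \<Gamma> ymax ymin z) u \<ge> u z"
  proof (cases "z \<in> \<Gamma>")
    case True
    then show ?thesis by (simp add: trans_pmf_def)
  next
    case False
    have \<alpha>: "0 \<le> 1 / (p - 1)" "1 / (p - 1) \<le> 1" using p by (auto simp: field_simps)
    have deg: "deg w z > 0" using A1[of z] by (intro deg_pos_if_nbhd_nonempty nonneg) blast
    have "Min (u ` nbhd w z) \<le> u (ymin z)" using ymin[OF False] by simp
    then have "(1 - 1 / (p - 1)) * ((Max (u ` nbhd w z) + Min (u ` nbhd w z)) / 2)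
        \<le> (1 - 1 / (p - 1)) * ((u (ymax z) + u (ymin z)) / 2)"
      using \<alpha> ymax[OF False] by (intro mult_left_mono) auto
    then show ?thesis
      using solP_int[OF False] Lp_eq_0_iff[OF deg, of p u]
        expectation_trans_pmf_unlabeled[OF nonneg deg False \<alpha>, of ymax ymin u]
      by linarith
  qed
  ultimately show "measure_pmf.expectation
      (cond_pmf (chain_pair (trans_pmf w p \<Gamma> ymax ymin) x i) {q. fst q = z}) (\<lambda>q. u (snd q))
      \<ge> u z"
    by (simp add: expectation_cond_chain_pair)
qed

end
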